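(* Let $G$ be a $6$-regular graph, $\mathcal S$ a canonical path partition of $G$, and $P$ a path component with end-vertices $o_1,o_2$. Let $x_1,x_2\in V_2$ be path neighbors on $P$, with $x_1$ immediately preceding $x_2$ when $P$ is traversed from $o_1$ to $o_2$. If $x_1$ goes to $o_1$, then every vertex that $x_2$ goes to is either $o_1$, $o_2$, or a vertex of a cycle component (i.e., $x_2$ goes to no end-vertex of a path component other than $P$).
   Context: All graphs are finite, simple and undirected. A path partition of $G=(V,E)$ is a set of vertex-disjoint paths (single vertices allowed) covering $V$; its members are components. A component with $t\ge3$ vertices is a cycle component if the subgraph induced on its vertex set has a spanning cycle; a one-vertex component is an isolated vertex; every other component is a path component. A path partition is canonical if (1) it has the minimum number of components among all path partitions of $G$; (2) among those, it has the maximum number of cycle components; (3) it has no isolated vertices. Given a canonical path partition $\mathcal S$ of $G$: two vertices are path neighbors if they are consecutive on a path component. An edge of $G$ is a free edge unless it joins two path neighbors or has both endpoints in the same cycle component. $V_1$ is the set of end-vertices of path components together with all vertices of cycle components. $V_2$ is the set of vertices not in $V_1$ that are joined by a free edge to a vertex of $V_1$. A balanced edge is a free edge with one endpoint in $V_1$ and the other in $V_2$; for $x\in V_2$, $y\in V_1$ we say $x$ goes to $y$ if $xy$ is a balanced edge. *)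

theory Defs
  imports Main
begin

definition simple_graph :: "'a set \<Rightarrow> ('a \<Rightarrow> 'a \<Rightarrow> bool) \<Rightarrow> bool" where
  "simple_graph V E \<longleftrightarrow> finite V \<and> (\<forall>u v. E u v \<longrightarrow> E v u) \<and> (\<forall>u. \<not> E u u)
     \<and> (\<forall>u v. E u v \<longrightarrow> u \<in> V \<and> v \<in> V)"

definition regular :: "'a set \<Rightarrow> ('a \<Rightarrow> 'a \<Rightarrow> bool) \<Rightarrow> nat \<Rightarrow> bool" where
  "regular V E k \<longleftrightarrow> (\<forall>v\<in>V. card {u \<in> V. E v u} = k)"

definition is_path :: "('a \<Rightarrow> 'a \<Rightarrow> bool) \<Rightarrow> 'a list \<Rightarrow> bool" where
  "is_path E xs \<longleftrightarrow> xs \<noteq> [] \<and> distinct xs \<and> (\<forall>i. Suc i < length xs \<longrightarrow> E (xs ! i) (xs ! Suc i))"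

definition path_partition :: "'a set \<Rightarrow> ('a \<Rightarrow> 'a \<Rightarrow> bool) \<Rightarrow> 'a list set \<Rightarrow> bool" where
  "path_partition V E S \<longleftrightarrow> finite S \<and> (\<forall>P\<in>S. is_path E P \<and> set P \<subseteq> V)
     \<and> (\<forall>P\<in>S. \<forall>Q\<in>S. P \<noteq> Q \<longrightarrow> set P \<inter> set Q = {})
     \<and> (\<Union>P\<in>S. set P) = V"

definition has_spanning_cycle :: "('a \<Rightarrow> 'a \<Rightarrow> bool) \<Rightarrow> 'a set \<Rightarrow> bool" where
  "has_spanning_cycle E X \<longleftrightarrow> (\<exists>ys. distinct ys \<and> set ys = X \<and> 3 \<le> length ys
     \<and> (\<forall>i. Suc i < length ys \<longrightarrow> E (ys ! i) (ys ! Suc i)) \<and> E (last ys) (hd ys))"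

definition cycle_comp :: "('a \<Rightarrow> 'a \<Rightarrow> bool) \<Rightarrow> 'a list \<Rightarrow> bool" where
  "cycle_comp E P \<longleftrightarrow> 3 \<le> length P \<and> has_spanning_cycle E (set P)"

definition isolated_comp :: "'a list \<Rightarrow> bool" where
  "isolated_comp P \<longleftrightarrow> length P = 1"

definition path_comp :: "('a \<Rightarrow> 'a \<Rightarrow> bool) \<Rightarrow> 'a list \<Rightarrow> bool" where
  "path_comp E P \<longleftrightarrow> \<not> isolated_comp P \<and> \<not> cycle_comp E P"

definition num_cycle_comps :: "('a \<Rightarrow> 'a \<Rightarrow> bool) \<Rightarrow> 'a list set \<Rightarrow> nat" where
  "num_cycle_comps E S = card {P \<in> S. cycle_comp E P}"

definition canonical :: "'a set \<Rightarrow> ('a \<Rightarrow> 'a \<Rightarrow> bool) \<Rightarrow> 'a list set \<Rightarrow> bool" where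
  "canonical V E S \<longleftrightarrow> path_partition V E S
     \<and> (\<forall>S'. path_partition V E S' \<longrightarrow> card S \<le> card S')
     \<and> (\<forall>S'. path_partition V E S' \<and> card S' = card S \<longrightarrow> num_cycle_comps E S' \<le> num_cycle_comps E S)
     \<and> (\<forall>P\<in>S. \<not> isolated_comp P)"

definition path_neighbors :: "('a \<Rightarrow> 'a \<Rightarrow> bool) \<Rightarrow> 'a list set \<Rightarrow> 'a \<Rightarrow> 'a \<Rightarrow> bool" where
  "path_neighbors E S u v \<longleftrightarrow> (\<exists>P\<in>S. path_comp E P \<and>
     (\<exists>i. Suc i < length P \<and> {P ! i, P ! Suc i} = {u, v}))"

definition free_edge :: "('a \<Rightarrow> 'a \<Rightarrow> bool) \<Rightarrow> 'a list set \<Rightarrow> 'a \<Rightarrow> 'a \<Rightarrow> bool" where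
  "free_edge E S u v \<longleftrightarrow> E u v \<and> \<not> path_neighbors E S u v
     \<and> \<not> (\<exists>C\<in>S. cycle_comp E C \<and> u \<in> set C \<and> v \<in> set C)"

definition V1 :: "('a \<Rightarrow> 'a \<Rightarrow> bool) \<Rightarrow> 'a list set \<Rightarrow> 'a set" where
  "V1 E S = {v. \<exists>P\<in>S. (path_comp E P \<and> (v = hd P \<or> v = last P)) \<or> (cycle_comp E P \<and> v \<in> set P)}"

definition V2 :: "'a set \<Rightarrow> ('a \<Rightarrow> 'a \<Rightarrow> bool) \<Rightarrow> 'a list set \<Rightarrow> 'a set" where
  "V2 V E S = {x \<in> V. x \<notin> V1 E S \<and> (\<exists>y \<in> V1 E S. free_edge E S x y)}"

definition balanced_edge :: "'a set \<Rightarrow> ('a \<Rightarrow> 'a \<Rightarrow> bool) \<Rightarrow> 'a list set \<Rightarrow> 'a \<Rightarrow> 'a \<Rightarrow> bool" where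
  "balanced_edge V E S u v \<longleftrightarrow> free_edge E S u v \<and>
     ((u \<in> V1 E S \<and> v \<in> V2 V E S) \<or> (v \<in> V1 E S \<and> u \<in> V2 V E S))"

definition goes_to :: "'a set \<Rightarrow> ('a \<Rightarrow> 'a \<Rightarrow> bool) \<Rightarrow> 'a list set \<Rightarrow> 'a \<Rightarrow> 'a \<Rightarrow> bool" where
  "goes_to V E S x y \<longleftrightarrow> x \<in> V2 V E S \<and> y \<in> V1 E S \<and> balanced_edge V E S x y"

end

theory Submission
  imports Defs
begin

text \<open>Suppose x2 went to an end-vertex y of another path component Q. Cut P between x1 and x2:
  the initial segment from o1 to x1 closes into a cycle through the edge x1 o1 (it has at least
  three vertices, since x1 is neither o1 nor its path neighbour), and the final segment from x2
  to o2 is glued onto Q at y. This replaces the two path components P and Q by one cycle and one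
  path, keeping the number of components but gaining a cycle, contrary to canonicity.\<close>

lemma is_path_iff_successively:
  "is_path E xs \<longleftrightarrow> xs \<noteq> [] \<and> distinct xs \<and> successively E xs"
  unfolding is_path_def successively_conv_nth by blast

lemma is_path_rev:
  assumes "\<And>u v. E u v \<Longrightarrow> E v u" and "is_path E xs"
  shows "is_path E (rev xs)"
proof -
  have "successively (\<lambda>u v. E v u) xs"
    using assms by (auto simp: is_path_iff_successively elim: successively_mono)
  then show ?thesis using assms(2) by (simp add: is_path_iff_successively)
qed

lemma is_path_ending_at:
  assumes "\<And>u v. E u v \<Longrightarrow> E v u" and "is_path E xs" and "y = hd xs \<or> y = last xs"
  obtains ys where "is_path E ys" "set ys = set xs" "last ys = y"
proof (cases "y = last xs")
  case False
  then have "last (rev xs) = y"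
    using assms(2,3) by (simp add: is_path_def last_rev)
  then show ?thesis using that is_path_rev[OF assms(1,2)] by simp
qed (use that assms(2) in blast)

lemma is_path_append:
  assumes "is_path E xs" "is_path E ys" "set xs \<inter> set ys = {}" "E (last xs) (hd ys)"
  shows "is_path E (xs @ ys)"
  using assms by (auto simp: is_path_iff_successively successively_append_iff)

lemma successively_take_drop:
  "successively R xs \<Longrightarrow> successively R (take n xs) \<and> successively R (drop n xs)"
  using successively_append_iff[of R "take n xs" "drop n xs"] by simp

lemma is_path_take: "is_path E xs \<Longrightarrow> 0 < n \<Longrightarrow> is_path E (take n xs)"
  by (simp add: is_path_iff_successively successively_take_drop)

lemma is_path_drop: "is_path E xs \<Longrightarrow> n < length xs \<Longrightarrow> is_path E (drop n xs)"
  by (simp add: is_path_iff_successively successively_take_drop)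

lemma cycle_comp_take:
  assumes "is_path E P" "2 \<le> i" "i < length P" "E (P ! i) (hd P)"
  shows "cycle_comp E (take (Suc i) P)"
proof -
  let ?A = "take (Suc i) P"
  have "distinct ?A" "\<forall>j. Suc j < length ?A \<longrightarrow> E (?A ! j) (?A ! Suc j)"
    using is_path_take[OF assms(1), of "Suc i"] by (simp_all add: is_path_def)
  moreover have "last ?A = P ! i" using assms(3) by (simp add: take_Suc_conv_app_nth)
  moreover have "hd ?A = hd P" "length ?A = Suc i" using assms(3) by simp_all
  ultimately show ?thesis
    using assms(2,4) unfolding cycle_comp_def has_spanning_cycle_def
    by (intro conjI exI[of _ ?A]) auto
qed

lemma splice_paths:
  assumes "is_path E P" "is_path E Q" "set P \<inter> set Q = {}" "Suc i < length P"
    and "E (last Q) (P ! Suc i)"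
  shows "is_path E (Q @ drop (Suc i) P)"
    and "set (take (Suc i) P) \<union> set (Q @ drop (Suc i) P) = set P \<union> set Q"
    and "set (take (Suc i) P) \<inter> set (Q @ drop (Suc i) P) = {}"
proof -
  have sub: "set (drop (Suc i) P) \<subseteq> set P" "set (take (Suc i) P) \<subseteq> set P"
    by (simp_all add: set_drop_subset set_take_subset)
  show "is_path E (Q @ drop (Suc i) P)"
    using assms sub by (intro is_path_append is_path_drop) (auto simp: hd_drop_conv_nth)
  have "set (take (Suc i) P) \<inter> set (drop (Suc i) P) = {}"
    using assms(1) by (simp add: is_path_def set_take_disj_set_drop_if_distinct)
  then show "set (take (Suc i) P) \<inter> set (Q @ drop (Suc i) P) = {}"
    using assms(3) sub by auto
  have "set P = set (take (Suc i) P) \<union> set (drop (Suc i) P)"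
    by (metis append_take_drop_id set_append)
  then show "set (take (Suc i) P) \<union> set (Q @ drop (Suc i) P) = set P \<union> set Q"
    by auto
qed

lemma path_partition_exchange:
  assumes "path_partition V E S" "P \<in> S" "Q \<in> S" "P \<noteq> Q"
    and "is_path E A" "is_path E B" "set A \<union> set B = set P \<union> set Q" "set A \<inter> set B = {}"
  defines "S' \<equiv> (S - {P, Q}) \<union> {A, B}"
  shows "path_partition V E S'" "card S' = card S"
proof -
  have fin: "finite S" and paths: "\<forall>P\<in>S. is_path E P \<and> set P \<subseteq> V"
    and disj: "\<forall>P\<in>S. \<forall>Q\<in>S. P \<noteq> Q \<longrightarrow> set P \<inter> set Q = {}" and cov: "(\<Union>P\<in>S. set P) = V"
    using assms(1) unfolding path_partition_def by blast+
  have ne: "A \<noteq> []" "B \<noteq> []" using assms(5,6) by (simp_all add: is_path_def)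
  have away: "set Z \<inter> set A = {}" "set Z \<inter> set B = {}" if "Z \<in> S - {P, Q}" for Z
  proof -
    have "set Z \<inter> set P = {}" "set Z \<inter> set Q = {}"
      using disj that assms(2,3) by auto
    then show "set Z \<inter> set A = {}" "set Z \<inter> set B = {}" using assms(7) by blast+
  qed
  then have new: "A \<notin> S - {P, Q}" "B \<notin> S - {P, Q}" using ne by fastforce+
  have "A \<noteq> B" using ne assms(8) by auto
  then have "card S' = card (S - {P, Q}) + 2"
    unfolding S'_def using new fin by (subst card_Un_disjoint) auto
  also have "\<dots> = card S"
    using assms(2,3,4) fin card_mono[OF fin, of "{P, Q}"] by (simp add: card_Diff_subset)
  finally show "card S' = card S" .
  have "set A \<union> set B \<subseteq> V" using paths assms(2,3,7) by auto
  then have "\<forall>Z\<in>S'. is_path E Z \<and> set Z \<subseteq> V"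
    using paths assms(5,6) unfolding S'_def by auto
  moreover have disj': "set X \<inter> set Y = {}" if "X \<in> S'" "Y \<in> S'" "X \<noteq> Y" for X Y
  proof -
    have AB: "set A \<inter> set B = {}" "set B \<inter> set A = {}" using assms(8) by auto
    have "X \<in> S \<and> Y \<in> S \<or> X \<in> S - {P, Q} \<and> Y \<in> {A, B} \<or> Y \<in> S - {P, Q} \<and> X \<in> {A, B}
        \<or> X \<in> {A, B} \<and> Y \<in> {A, B}"
      using that(1,2) unfolding S'_def by blast
    then show ?thesis
    proof (elim disjE conjE)
      assume "X \<in> S" "Y \<in> S" then show ?thesis using disj that(3) by blast
    next
      assume "X \<in> S - {P, Q}" "Y \<in> {A, B}" then show ?thesis using away by blast
    next
      assume "Y \<in> S - {P, Q}" "X \<in> {A, B}" then show ?thesis using away by blast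
    next
      assume "X \<in> {A, B}" "Y \<in> {A, B}" then show ?thesis using AB that(3) by blast
    qed
  qed
  moreover have "(\<Union>Z\<in>S'. set Z) = V"
  proof -
    have "(\<Union>Z\<in>S'. set Z) = (\<Union>Z\<in>S - {P, Q}. set Z) \<union> set P \<union> set Q"
      using assms(7) unfolding S'_def by auto
    also have "\<dots> = V" using assms(2,3) cov by blast
    finally show ?thesis .
  qed
  moreover have "finite S'" using fin by (simp add: S'_def)
  ultimately show "path_partition V E S'"
    unfolding path_partition_def using disj' by (intro conjI ballI impI) auto
qed

lemma canonical_no_cycle_exchange:
  assumes "canonical V E S" "P \<in> S" "Q \<in> S" "P \<noteq> Q"
    and "\<not> cycle_comp E P" "\<not> cycle_comp E Q"
    and "is_path E A" "is_path E B" "set A \<union> set B = set P \<union> set Q" "set A \<inter> set B = {}"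
  shows "\<not> cycle_comp E A"
proof
  assume cyc: "cycle_comp E A"
  define S' where "S' = (S - {P, Q}) \<union> {A, B}"
  have pp: "path_partition V E S" using assms(1) by (simp add: canonical_def)
  note S' = path_partition_exchange[OF pp assms(2-4,7-10), folded S'_def]
  have "A \<notin> S"
  proof
    assume "A \<in> S"
    moreover have "A \<noteq> P" "A \<noteq> Q" using cyc assms(5,6) by auto
    ultimately have "set A \<inter> (set P \<union> set Q) = {}"
      using pp assms(2,3) unfolding path_partition_def by blast
    moreover have "hd A \<in> set A" using assms(7) by (simp add: is_path_def)
    ultimately show False using assms(9) by blast
  qed
  moreover have "finite S" "finite S'" using pp S'(1) by (simp_all add: path_partition_def)
  ultimately have "Suc (num_cycle_comps E S) = card (insert A {C \<in> S. cycle_comp E C})"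
    by (simp add: num_cycle_comps_def)
  also have "\<dots> \<le> num_cycle_comps E S'"
    unfolding num_cycle_comps_def using cyc assms(5,6) \<open>finite S'\<close>
    by (intro card_mono) (auto simp: S'_def)
  also have "\<dots> \<le> num_cycle_comps E S"
    using assms(1) S' unfolding canonical_def by blast
  finally show False by simp
qed

lemma path_neighbors_nth:
  assumes "P \<in> S" "path_comp E P" "Suc j < length P"
  shows "path_neighbors E S (P ! Suc j) (P ! j)"
  using assms unfolding path_neighbors_def by (metis insert_commute)

lemma goes_to_hd_position:
  assumes "P \<in> S" "path_comp E P" "i < length P" "P ! i \<in> V2 V E S"
    and "goes_to V E S (P ! i) (hd P)"
  shows "2 \<le> i"
proof -
  have "hd P \<in> V1 E S" using assms(1,2) unfolding V1_def by blast
  moreover have hd_nth: "hd P = P ! 0" using assms(3) by (cases P) simp_all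
  moreover have "P ! i \<notin> V1 E S" using assms(4) by (simp add: V2_def)
  ultimately have "i \<noteq> 0" by metis
  moreover have "i \<noteq> 1"
  proof
    assume "i = 1"
    then have "path_neighbors E S (P ! i) (hd P)"
      using path_neighbors_nth[OF assms(1,2), of 0] assms(3) hd_nth by simp
    then show False using assms(5) by (simp add: goes_to_def balanced_edge_def free_edge_def)
  qed
  ultimately show ?thesis by linarith
qed

theorem mainTheorem7:
  fixes V :: "'a set" and E :: "'a \<Rightarrow> 'a \<Rightarrow> bool" and S :: "'a list set"
    and P :: "'a list" and x1 x2 :: 'a and i :: nat
  assumes "simple_graph V E"
    and "regular V E 6"
    and "canonical V E S"
    and "P \<in> S" and "path_comp E P"
    and "Suc i < length P" and "P ! i = x1" and "P ! Suc i = x2"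
    and "x1 \<in> V2 V E S" and "x2 \<in> V2 V E S"
    and "goes_to V E S x1 (hd P)"
  shows "\<forall>y. goes_to V E S x2 y \<longrightarrow>
           y = hd P \<or> y = last P \<or> (\<exists>C\<in>S. cycle_comp E C \<and> y \<in> set C)"
proof (intro allI impI)
  fix y assume "goes_to V E S x2 y"
  then have "y \<in> V1 E S" "E x2 y" by (simp_all add: goes_to_def balanced_edge_def free_edge_def)
  show "y = hd P \<or> y = last P \<or> (\<exists>C\<in>S. cycle_comp E C \<and> y \<in> set C)"
  proof (rule ccontr)
    assume "\<not> ?thesis"
    with \<open>y \<in> V1 E S\<close> obtain Q
      where Q: "Q \<in> S" "path_comp E Q" "y = hd Q \<or> y = last Q" "Q \<noteq> P"
      unfolding V1_def by blast
    have sym: "\<And>u v. E u v \<Longrightarrow> E v u" using assms(1) by (simp add: simple_graph_def)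
    have "path_partition V E S" using assms(3) by (simp add: canonical_def)
    then have paths: "is_path E P" "is_path E Q" and "set P \<inter> set Q = {}"
      using assms(4) Q(1,4) unfolding path_partition_def by simp_all
    obtain Q' where Q': "is_path E Q'" "set Q' = set Q" "last Q' = y"
      using is_path_ending_at[OF sym paths(2) Q(3)] .
    have "E (last Q') (P ! Suc i)" using \<open>E x2 y\<close> Q'(3) assms(8) sym by blast
    note B = splice_paths[OF paths(1) Q'(1) _ assms(6) this]
    have "2 \<le> i" using goes_to_hd_position[OF assms(4,5), of i] assms(6,7,9,11) by simp
    moreover have "E (P ! i) (hd P)"
      using assms(7,11) by (simp add: goes_to_def balanced_edge_def free_edge_def)
    ultimately have "cycle_comp E (take (Suc i) P)"
      using assms(6) by (intro cycle_comp_take paths(1)) simp_all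
    moreover have "\<not> cycle_comp E (take (Suc i) P)"
      using canonical_no_cycle_exchange[OF assms(3,4) Q(1) Q(4)[symmetric]] assms(5) Q(2) paths(1) B
        \<open>set P \<inter> set Q = {}\<close> Q'(2) by (simp add: path_comp_def is_path_take)
    ultimately show False by blast
  qed
qed

end
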